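(* Let $t\geq 1$ and let $r_1,\ldots,r_t$ be positive integers with $\gcd(r_i,r_j)=1$ for all $i\neq j$. Let $F$ be the free group on $\{x_1,\ldots,x_t\}$ and let $S$ be the normal closure in $F$ of $\{x_1^{r_1},\ldots,x_t^{r_t}\}$ (so $F/S$ is the free product of the cyclic groups $\langle x_i\mid x_i^{r_i}\rangle\cong\mathbb{Z}_{r_i}$). Define $\rho_1(S)=S$ and $\rho_{n+1}(S)=[\rho_n(S),F]$ for $n\geq 1$. Then (i) $S\cap\gamma_2(F)=\rho_2(S)$; (ii) $S\cap\gamma_3(F)=\rho_3(S)$, and consequently $\rho_2(S)\cap\gamma_3(F)=\rho_3(S)$.
   Context: $\gamma_k(F)$ denotes the $k$-th term of the lower central series of $F$: $\gamma_1(F)=F$, $\gamma_{k+1}(F)=[\gamma_k(F),F]$. For subgroups $A,B$, $[A,B]$ is the subgroup generated by all commutators $[a,b]$, $a\in A$, $b\in B$. *)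

theory Defs
  imports "HOL-Algebra.Algebra"
begin

text \<open>Words in letters x_i (False) and x_i inverse (True).\<close>

fun reduced_word :: "(nat \<times> bool) list \<Rightarrow> bool" where
  "reduced_word [] = True"
| "reduced_word [_] = True"
| "reduced_word (a # b # w) = ((\<not> (fst a = fst b \<and> snd a \<noteq> snd b)) \<and> reduced_word (b # w))"

fun eval_word :: "'a monoid \<Rightarrow> (nat \<Rightarrow> 'a) \<Rightarrow> (nat \<times> bool) list \<Rightarrow> 'a" where
  "eval_word F x [] = \<one>\<^bsub>F\<^esub>"
| "eval_word F x ((i, b) # w) =
     (if b then inv\<^bsub>F\<^esub> (x i) else x i) \<otimes>\<^bsub>F\<^esub> eval_word F x w"

definition free_group_on :: "'a monoid \<Rightarrow> (nat \<Rightarrow> 'a) \<Rightarrow> nat set \<Rightarrow> bool" where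
  "free_group_on F x I \<longleftrightarrow>
     group F \<and> x ` I \<subseteq> carrier F \<and> generate F (x ` I) = carrier F \<and>
     (\<forall>w. w \<noteq> [] \<and> set (map fst w) \<subseteq> I \<and> reduced_word w \<longrightarrow> eval_word F x w \<noteq> \<one>\<^bsub>F\<^esub>)"

definition comm_subgroup :: "'a monoid \<Rightarrow> 'a set \<Rightarrow> 'a set \<Rightarrow> 'a set" where
  "comm_subgroup F A B = generate F
     {inv\<^bsub>F\<^esub> a \<otimes>\<^bsub>F\<^esub> inv\<^bsub>F\<^esub> b \<otimes>\<^bsub>F\<^esub> a \<otimes>\<^bsub>F\<^esub> b | a b. a \<in> A \<and> b \<in> B}"

text \<open>Lower central series: gamma 1 = F, gamma (k+1) = [gamma k, F]. (gamma 0 := F, unused.)\<close>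
fun lower_central :: "'a monoid \<Rightarrow> nat \<Rightarrow> 'a set" where
  "lower_central F 0 = carrier F"
| "lower_central F (Suc 0) = carrier F"
| "lower_central F (Suc (Suc k)) = comm_subgroup F (lower_central F (Suc k)) (carrier F)"

text \<open>rho 1 S = S, rho (n+1) S = [rho n S, F]. (rho 0 := S, unused.)\<close>
fun rho :: "'a monoid \<Rightarrow> 'a set \<Rightarrow> nat \<Rightarrow> 'a set" where
  "rho F S 0 = S"
| "rho F S (Suc 0) = S"
| "rho F S (Suc (Suc n)) = comm_subgroup F (rho F S (Suc n)) (carrier F)"

definition normal_closure :: "'a monoid \<Rightarrow> 'a set \<Rightarrow> 'a set" where
  "normal_closure F R = generate F {g \<otimes>\<^bsub>F\<^esub> s \<otimes>\<^bsub>F\<^esub> inv\<^bsub>F\<^esub> g | g s. g \<in> carrier F \<and> s \<in> R}"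

end

theory Submission
  imports Defs
begin

text \<open>Write \<open>y\<^sub>i = x\<^sub>i\<^bsup>r\<^sub>i\<^esup>\<close>. Modulo \<open>\<rho>\<^sub>2(S) = [S, F]\<close> the \<open>y\<^sub>i\<close> are central, so every element of
  \<open>S\<close> is congruent to a product \<open>\<Prod> y\<^sub>i\<^bsup>n\<^sub>i\<^esup>\<close>. A homomorphism from \<open>F\<close> to a nilpotent group of
  class 2 sending \<open>x\<^sub>i\<close> to the \<open>i\<close>-th unit vector reads off the abelianisation; on \<open>\<gamma>\<^sub>2(F)\<close> it
  vanishes, which forces \<open>n\<^sub>i r\<^sub>i = 0\<close>. Modulo \<open>\<rho>\<^sub>3(S)\<close> the commutators \<open>[y\<^sub>i, x\<^sub>j]\<close> are
  central and generate \<open>\<rho>\<^sub>2(S)\<close>, so an element of \<open>S \<inter> \<gamma>\<^sub>3(F) \<subseteq> \<rho>\<^sub>2(S)\<close> is congruent to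
  \<open>\<Prod> [y\<^sub>i, x\<^sub>j]\<^bsup>n\<^sub>i\<^sub>j\<^esup>\<close>. The same homomorphism kills \<open>\<gamma>\<^sub>3(F)\<close> and sends \<open>[y\<^sub>i, x\<^sub>j]\<close> to
  \<open>r\<^sub>i (e\<^sub>i \<and> e\<^sub>j)\<close>, giving \<open>n\<^sub>i\<^sub>j r\<^sub>i = n\<^sub>j\<^sub>i r\<^sub>j\<close>; by coprimality \<open>n\<^sub>i\<^sub>j = m r\<^sub>j\<close>, \<open>n\<^sub>j\<^sub>i = m r\<^sub>i\<close>,
  and \<open>[y\<^sub>i, x\<^sub>j]\<^bsup>r\<^sub>j\<^esup> [y\<^sub>j, x\<^sub>i]\<^bsup>r\<^sub>i\<^esup> \<equiv> [y\<^sub>i, y\<^sub>j] [y\<^sub>j, y\<^sub>i] = 1\<close> modulo \<open>\<rho>\<^sub>3(S)\<close>.\<close>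

text \<open>The constants of the statement are defined for plain monoids, not for monoid schemes, so
  lemmas about them are stated in this instance of the locale \<open>group\<close>.\<close>

locale plain_group = group G for G :: "'a monoid" (structure)

section \<open>Products of powers of central elements\<close>

definition pow_prod :: "('b, 'c) monoid_scheme \<Rightarrow> ('i \<Rightarrow> 'b) \<Rightarrow> 'i list \<Rightarrow> ('i \<Rightarrow> int) \<Rightarrow> 'b" where
  "pow_prod G w L n = foldr (\<lambda>l acc. w l [^]\<^bsub>G\<^esub> n l \<otimes>\<^bsub>G\<^esub> acc) L \<one>\<^bsub>G\<^esub>"

lemma pow_prod_Nil [simp]: "pow_prod G w [] n = \<one>\<^bsub>G\<^esub>"
  by (simp add: pow_prod_def)

lemma pow_prod_Cons [simp]: "pow_prod G w (l # L) n = w l [^]\<^bsub>G\<^esub> n l \<otimes>\<^bsub>G\<^esub> pow_prod G w L n"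
  by (simp add: pow_prod_def)

definition (in group) central :: "'a \<Rightarrow> bool" where
  "central z \<longleftrightarrow> z \<in> carrier G \<and> (\<forall>g\<in>carrier G. z \<otimes> g = g \<otimes> z)"

context group begin

lemma inv_mult_cancel [simp]: "x \<in> carrier G \<Longrightarrow> y \<in> carrier G \<Longrightarrow> inv x \<otimes> (x \<otimes> y) = y"
  by (simp add: m_assoc[symmetric])

lemma mult_inv_cancel [simp]: "x \<in> carrier G \<Longrightarrow> y \<in> carrier G \<Longrightarrow> x \<otimes> (inv x \<otimes> y) = y"
  by (simp add: m_assoc[symmetric])

lemma central_closed: "central z \<Longrightarrow> z \<in> carrier G"
  by (simp add: central_def)

lemma central_commute: "central z \<Longrightarrow> g \<in> carrier G \<Longrightarrow> z \<otimes> g = g \<otimes> z"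
  by (simp add: central_def)

lemma central_one: "central \<one>"
  by (simp add: central_def)

lemma central_mult: "central a \<Longrightarrow> central b \<Longrightarrow> central (a \<otimes> b)"
  unfolding central_def by (metis m_assoc m_closed)

lemma central_inv:
  assumes a: "central a" shows "central (inv a)"
proof -
  have "inv a \<otimes> g = g \<otimes> inv a" if g: "g \<in> carrier G" for g
  proof -
    have "inv (a \<otimes> inv g) = inv (inv g \<otimes> a)"
      using central_commute[OF a inv_closed[OF g]] by simp
    then show ?thesis
      using central_closed[OF a] g by (simp add: inv_mult_group)
  qed
  then show ?thesis
    using central_closed[OF a] by (simp add: central_def)
qed

lemma central_nat_pow: "central a \<Longrightarrow> central (a [^] (n::nat))"
  by (induction n) (simp_all add: central_one central_mult)

lemma central_int_pow: "central a \<Longrightarrow> central (a [^] (k::int))"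
  by (simp add: int_pow_def2 central_nat_pow central_inv del: pow_nat)

lemma central_conj: "central c \<Longrightarrow> q \<in> carrier G \<Longrightarrow> inv q \<otimes> c \<otimes> q = c"
  using central_commute[of c q] central_closed[of c] by (simp add: m_assoc)

lemma pow_prod_closed: "w ` set L \<subseteq> carrier G \<Longrightarrow> pow_prod G w L n \<in> carrier G"
  by (induction L) auto

lemma pow_prod_central: "\<forall>l\<in>set L. central (w l) \<Longrightarrow> central (pow_prod G w L n)"
  by (induction L) (auto intro: central_mult central_one central_int_pow)

lemma pow_prod_add:
  "\<forall>l\<in>set L. central (w l) \<Longrightarrow>
   pow_prod G w L n \<otimes> pow_prod G w L m = pow_prod G w L (\<lambda>l. n l + m l)"
proof (induction L)
  case Nil
  then show ?case by simp
next
  case (Cons a L)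
  let ?x = "w a [^] n a" and ?y = "w a [^] m a"
  let ?P = "pow_prod G w L n" and ?R = "pow_prod G w L m"
  have wa: "w a \<in> carrier G" using Cons.prems central_closed by auto
  have cP: "central ?P" using Cons.prems by (auto intro: pow_prod_central)
  have cR: "?R \<in> carrier G" using Cons.prems by (auto intro: central_closed pow_prod_central)
  have "(?x \<otimes> ?P) \<otimes> (?y \<otimes> ?R) = ?x \<otimes> ((?P \<otimes> ?y) \<otimes> ?R)"
    using wa cP cR central_closed by (simp add: m_assoc)
  also have "\<dots> = (?x \<otimes> ?y) \<otimes> (?P \<otimes> ?R)"
    using wa cP cR central_closed central_commute[OF cP, of ?y] by (simp add: m_assoc)
  finally show ?case
    using Cons wa by (simp add: int_pow_mult)
qed

lemma pow_prod_zero: "w ` set L \<subseteq> carrier G \<Longrightarrow> \<forall>l\<in>set L. n l = 0 \<Longrightarrow> pow_prod G w L n = \<one>"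
  by (induction L) auto

lemma pow_prod_indicator:
  assumes "distinct L" "l \<in> set L" "w ` set L \<subseteq> carrier G"
  shows "pow_prod G w L (\<lambda>k. if k = l then 1 else 0) = w l"
  using assms
proof (induction L)
  case (Cons a L)
  show ?case
  proof (cases "a = l")
    case True
    then have "pow_prod G w L (\<lambda>k. if k = l then 1 else 0) = \<one>"
      using Cons.prems by (intro pow_prod_zero) auto
    then show ?thesis using True Cons.prems by simp
  qed (use Cons in auto)
qed simp

lemma pow_prod_uminus:
  assumes c: "\<forall>l\<in>set L. central (w l)"
  shows "pow_prod G w L (\<lambda>l. - n l) = inv (pow_prod G w L n)"
proof -
  have wc: "w ` set L \<subseteq> carrier G" using c central_closed by auto
  have "pow_prod G w L n \<otimes> pow_prod G w L (\<lambda>l. - n l) = \<one>"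
    using pow_prod_add[OF c, of n "\<lambda>l. - n l"] pow_prod_zero[OF wc] by simp
  then show ?thesis
    using pow_prod_closed[OF wc] by (metis inv_comm inv_equality)
qed

lemma pow_prod_append:
  "w ` set L \<subseteq> carrier G \<Longrightarrow> w ` set L' \<subseteq> carrier G \<Longrightarrow>
   pow_prod G w (L @ L') n = pow_prod G w L n \<otimes> pow_prod G w L' n"
  by (induction L) (auto simp: pow_prod_closed m_assoc)

end

lemma (in group) pow_prod_concat_eq_one:
  "\<forall>L\<in>set Ls. w ` set L \<subseteq> carrier G \<and> pow_prod G w L n = \<one> \<Longrightarrow> pow_prod G w (concat Ls) n = \<one>"
proof (induction Ls)
  case (Cons L Ls)
  have "w ` set (concat Ls) \<subseteq> carrier G" using Cons.prems by (auto simp: image_subset_iff)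
  then show ?case using Cons by (simp add: pow_prod_append)
qed simp

lemma (in group_hom) hom_pow_prod:
  "w ` set L \<subseteq> carrier G \<Longrightarrow> h (pow_prod G w L n) = pow_prod H (\<lambda>l. h (w l)) L n"
  by (induction L) (auto simp: G.pow_prod_closed hom_int_pow)

section \<open>Commutators\<close>

definition commutator :: "('a, 'b) monoid_scheme \<Rightarrow> 'a \<Rightarrow> 'a \<Rightarrow> 'a" where
  "commutator G a b = inv\<^bsub>G\<^esub> a \<otimes>\<^bsub>G\<^esub> inv\<^bsub>G\<^esub> b \<otimes>\<^bsub>G\<^esub> a \<otimes>\<^bsub>G\<^esub> b"

lemma comm_subgroup_eq_generate_commutators:
  "comm_subgroup G A B = generate G {commutator G a b | a b. a \<in> A \<and> b \<in> B}"
  unfolding comm_subgroup_def commutator_def by simp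

context group begin

lemma commutator_closed [simp]: "a \<in> carrier G \<Longrightarrow> b \<in> carrier G \<Longrightarrow> commutator G a b \<in> carrier G"
  by (simp add: commutator_def)

lemma commutator_one_right: "a \<in> carrier G \<Longrightarrow> commutator G a \<one> = \<one>"
  by (simp add: commutator_def m_assoc)

lemma commutator_one_left: "a \<in> carrier G \<Longrightarrow> commutator G \<one> a = \<one>"
  by (simp add: commutator_def m_assoc)

lemma commutator_eq_one_iff:
  "a \<in> carrier G \<Longrightarrow> b \<in> carrier G \<Longrightarrow> commutator G a b = \<one> \<longleftrightarrow> a \<otimes> b = b \<otimes> a"
  by (simp add: commutator_def m_assoc inv_solve_left' eq_commute[of "b \<otimes> a"])

lemma commutator_mult_swap: "a \<in> carrier G \<Longrightarrow> b \<in> carrier G \<Longrightarrow> commutator G a b \<otimes> commutator G b a = \<one>"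
  by (simp add: commutator_def m_assoc)

lemma commutator_mult_right:
  "s \<in> carrier G \<Longrightarrow> f \<in> carrier G \<Longrightarrow> f' \<in> carrier G \<Longrightarrow>
   commutator G s (f \<otimes> f') = commutator G s f' \<otimes> (inv f' \<otimes> commutator G s f \<otimes> f')"
  by (simp add: commutator_def m_assoc inv_mult_group)

lemma commutator_inv_right:
  "s \<in> carrier G \<Longrightarrow> f \<in> carrier G \<Longrightarrow> commutator G s (inv f) = inv (f \<otimes> commutator G s f \<otimes> inv f)"
  by (simp add: commutator_def m_assoc inv_mult_group)

lemma commutator_mult_left:
  "s \<in> carrier G \<Longrightarrow> s' \<in> carrier G \<Longrightarrow> f \<in> carrier G \<Longrightarrow>
   commutator G (s \<otimes> s') f = (inv s' \<otimes> commutator G s f \<otimes> s') \<otimes> commutator G s' f"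
  by (simp add: commutator_def m_assoc inv_mult_group)

lemma commutator_inv_left:
  "s \<in> carrier G \<Longrightarrow> f \<in> carrier G \<Longrightarrow> commutator G (inv s) f = inv (s \<otimes> commutator G s f \<otimes> inv s)"
  by (simp add: commutator_def m_assoc inv_mult_group)

lemma commutator_conj:
  "a \<in> carrier G \<Longrightarrow> b \<in> carrier G \<Longrightarrow> g \<in> carrier G \<Longrightarrow>
   g \<otimes> commutator G a b \<otimes> inv g = commutator G (g \<otimes> a \<otimes> inv g) (g \<otimes> b \<otimes> inv g)"
  by (simp add: commutator_def m_assoc inv_mult_group)

lemma commutator_conj_left:
  "a \<in> carrier G \<Longrightarrow> f \<in> carrier G \<Longrightarrow> g \<in> carrier G \<Longrightarrow>
   commutator G (g \<otimes> a \<otimes> inv g) f = g \<otimes> commutator G a (inv g \<otimes> f \<otimes> g) \<otimes> inv g"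
  by (simp add: commutator_def m_assoc inv_mult_group)

lemma commutator_nat_pow_right:
  assumes a: "a \<in> carrier G" and b: "b \<in> carrier G" and c: "central (commutator G a b)"
  shows "commutator G a (b [^] (m::nat)) = commutator G a b [^] m"
proof (induction m)
  case 0
  then show ?case using a by (simp add: commutator_one_right)
next
  case (Suc m)
  have "commutator G a (b [^] Suc m) = commutator G a b \<otimes> (inv b \<otimes> commutator G a (b [^] m) \<otimes> b)"
    using commutator_mult_right[OF a nat_pow_closed[OF b] b] by simp
  also have "inv b \<otimes> commutator G a (b [^] m) \<otimes> b = commutator G a b [^] m"
    unfolding Suc.IH using central_conj[OF central_int_pow[OF c, of "int m"] b] by (simp add: int_pow_int)
  also have "commutator G a b \<otimes> commutator G a b [^] m = commutator G a b [^] Suc m"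
    using nat_pow_Suc2[OF central_closed[OF c]] by simp
  finally show ?case .
qed

end

lemma (in group_hom) hom_commutator:
  "a \<in> carrier G \<Longrightarrow> b \<in> carrier G \<Longrightarrow> h (commutator G a b) = commutator H (h a) (h b)"
  unfolding commutator_def by (simp only: hom_mult G.m_closed G.inv_closed hom_inv)

section \<open>Normal closures and commutator subgroups\<close>

lemma lower_central_2: "lower_central G 2 = comm_subgroup G (carrier G) (carrier G)"
  by (simp add: numeral_2_eq_2)

lemma lower_central_3: "lower_central G 3 = comm_subgroup G (lower_central G 2) (carrier G)"
  by (simp add: numeral_2_eq_2 numeral_3_eq_3)

lemma rho_2: "rho F S 2 = comm_subgroup F S (carrier F)"
  by (simp add: numeral_2_eq_2)

lemma rho_3: "rho F S 3 = comm_subgroup F (rho F S 2) (carrier F)"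
  by (simp add: numeral_2_eq_2 numeral_3_eq_3)

context plain_group begin

lemma generate_normal:
  assumes Gen: "Gen \<subseteq> carrier G"
    and conj: "\<And>x g. x \<in> Gen \<Longrightarrow> g \<in> carrier G \<Longrightarrow> g \<otimes> x \<otimes> inv g \<in> Gen"
  shows "generate G Gen \<lhd> G"
  unfolding normal_inv_iff
proof (intro conjI ballI)
  show "subgroup (generate G Gen) G" by (rule generate_is_subgroup[OF Gen])
next
  fix g h assume g: "g \<in> carrier G" and h: "h \<in> generate G Gen"
  from h show "g \<otimes> h \<otimes> inv g \<in> generate G Gen"
  proof (induction rule: generate.induct)
    case one
    then show ?case using g by (simp add: generate.one)
  next
    case (incl h)
    then show ?case using conj g by (simp add: generate.incl)
  next
    case (inv h)
    have "g \<otimes> inv h \<otimes> inv g = inv (g \<otimes> h \<otimes> inv g)"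
      using g inv Gen by (auto simp: m_assoc inv_mult_group)
    then show ?case using conj[OF inv g] generate.inv by metis
  next
    case (eng h1 h2)
    have "h1 \<in> carrier G" "h2 \<in> carrier G" using eng generate_in_carrier[OF Gen] by auto
    then have "g \<otimes> (h1 \<otimes> h2) \<otimes> inv g = (g \<otimes> h1 \<otimes> inv g) \<otimes> (g \<otimes> h2 \<otimes> inv g)"
      using g by (simp add: m_assoc)
    then show ?case using eng generate.eng by metis
  qed
qed

lemma normal_closure_normal:
  assumes R: "R \<subseteq> carrier G" shows "normal_closure G R \<lhd> G"
  unfolding normal_closure_def
proof (rule generate_normal)
  show "{g \<otimes> s \<otimes> inv g | g s. g \<in> carrier G \<and> s \<in> R} \<subseteq> carrier G" using R by auto
next
  fix x g' assume "x \<in> {g \<otimes> s \<otimes> inv g | g s. g \<in> carrier G \<and> s \<in> R}" and g': "g' \<in> carrier G"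
  then obtain g s where x: "x = g \<otimes> s \<otimes> inv g" and g: "g \<in> carrier G" and s: "s \<in> R" by blast
  have "g' \<otimes> x \<otimes> inv g' = (g' \<otimes> g) \<otimes> s \<otimes> inv (g' \<otimes> g)"
    using x g g' s R by (auto simp: m_assoc inv_mult_group)
  then show "g' \<otimes> x \<otimes> inv g' \<in> {g \<otimes> s \<otimes> inv g | g s. g \<in> carrier G \<and> s \<in> R}"
    using g g' s by blast
qed

lemma normal_closure_incl: "R \<subseteq> carrier G \<Longrightarrow> R \<subseteq> normal_closure G R"
  unfolding normal_closure_def by (force intro: generate.incl)

lemma normal_closure_subset:
  assumes N: "N \<lhd> G" and R: "R \<subseteq> N" shows "normal_closure G R \<subseteq> N"
  unfolding normal_closure_def
proof (rule generate_subgroup_incl)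
  show "subgroup N G" using N by (rule normal_imp_subgroup)
  show "{g \<otimes> s \<otimes> inv g | g s. g \<in> carrier G \<and> s \<in> R} \<subseteq> N"
    using N R by (auto simp: normal_inv_iff)
qed

lemma commutator_in_comm_subgroup: "a \<in> A \<Longrightarrow> b \<in> B \<Longrightarrow> commutator G a b \<in> comm_subgroup G A B"
  unfolding comm_subgroup_eq_generate_commutators by (rule generate.incl) blast

lemma comm_subgroup_mono: "A \<subseteq> A' \<Longrightarrow> comm_subgroup G A B \<subseteq> comm_subgroup G A' B"
  unfolding comm_subgroup_eq_generate_commutators by (rule mono_generate) blast

lemma comm_subgroup_normal:
  assumes A: "A \<lhd> G" shows "comm_subgroup G A (carrier G) \<lhd> G"
  unfolding comm_subgroup_eq_generate_commutators
proof (rule generate_normal)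
  have "A \<subseteq> carrier G" using A normal_imp_subgroup subgroup.subset by blast
  then show "{commutator G a b |a b. a \<in> A \<and> b \<in> carrier G} \<subseteq> carrier G" by auto
next
  fix x g assume "x \<in> {commutator G a b |a b. a \<in> A \<and> b \<in> carrier G}" and g: "g \<in> carrier G"
  then obtain a b where x: "x = commutator G a b" and a: "a \<in> A" and b: "b \<in> carrier G" by blast
  have ac: "a \<in> carrier G" using A a normal_imp_subgroup subgroup.subset by blast
  have "g \<otimes> x \<otimes> inv g = commutator G (g \<otimes> a \<otimes> inv g) (g \<otimes> b \<otimes> inv g)"
    using x ac b g by (simp add: commutator_conj)
  moreover have "g \<otimes> a \<otimes> inv g \<in> A" using A a g by (simp add: normal_inv_iff)
  ultimately show "g \<otimes> x \<otimes> inv g \<in> {commutator G a b |a b. a \<in> A \<and> b \<in> carrier G}"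
    using b g by blast
qed

lemma comm_subgroup_subset:
  assumes A: "A \<lhd> G" shows "comm_subgroup G A (carrier G) \<subseteq> A"
  unfolding comm_subgroup_eq_generate_commutators
proof (rule generate_subgroup_incl)
  show sA: "subgroup A G" using A by (rule normal_imp_subgroup)
  show "{commutator G a b |a b. a \<in> A \<and> b \<in> carrier G} \<subseteq> A"
  proof safe
    fix a b assume a: "a \<in> A" and b: "b \<in> carrier G"
    have ac: "a \<in> carrier G" using subgroup.subset[OF sA] a by blast
    have "inv b \<otimes> a \<otimes> b \<in> A" using normal.inv_op_closed1[OF A b a] .
    then have "inv a \<otimes> (inv b \<otimes> a \<otimes> b) \<in> A"
      using b subgroup.m_closed[OF sA subgroup.m_inv_closed[OF sA a]] by simp
    then show "commutator G a b \<in> A" using ac b by (simp add: commutator_def m_assoc)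
  qed
qed

lemma lower_central_3_subset_2: "lower_central G 3 \<subseteq> lower_central G 2"
  unfolding lower_central_3 lower_central_2
  by (intro comm_subgroup_subset comm_subgroup_normal normal_self)

lemma commutator_generate_right:
  assumes H: "H \<lhd> G" and a: "a \<in> carrier G" and Gen: "Gen \<subseteq> carrier G"
    and gens: "\<And>x. x \<in> Gen \<Longrightarrow> commutator G a x \<in> H"
    and f: "f \<in> generate G Gen"
  shows "commutator G a f \<in> H"
  using f
proof (induction rule: generate.induct)
  case one
  then show ?case using a H by (simp add: commutator_one_right normal_imp_subgroup subgroup.one_closed)
next
  case (incl x)
  then show ?case by (rule gens)
next
  case (inv x)
  have x: "x \<in> carrier G" using inv Gen by auto
  have "x \<otimes> commutator G a x \<otimes> inv x \<in> H" using H gens[OF inv] x by (simp add: normal_inv_iff)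
  then show ?case
    using commutator_inv_right[OF a x] H normal_imp_subgroup subgroup.m_inv_closed by metis
next
  case (eng f1 f2)
  have f: "f1 \<in> carrier G" "f2 \<in> carrier G" using eng.hyps generate_in_carrier[OF Gen] by auto
  have "inv f2 \<otimes> commutator G a f1 \<otimes> f2 \<in> H"
    using normal.inv_op_closed1[OF H f(2) eng.IH(1)] .
  then show ?case
    using commutator_mult_right[OF a f] eng.IH(2) H normal_imp_subgroup subgroup.m_closed by metis
qed

lemma commutator_generate_left:
  assumes H: "H \<lhd> G" and f: "f \<in> carrier G" and Gen: "Gen \<subseteq> carrier G"
    and gens: "\<And>x. x \<in> Gen \<Longrightarrow> commutator G x f \<in> H"
    and a: "a \<in> generate G Gen"
  shows "commutator G a f \<in> H"
  using a
proof (induction rule: generate.induct)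
  case one
  then show ?case using f H by (simp add: commutator_one_left normal_imp_subgroup subgroup.one_closed)
next
  case (incl x)
  then show ?case by (rule gens)
next
  case (inv x)
  have x: "x \<in> carrier G" using inv Gen by auto
  have "x \<otimes> commutator G x f \<otimes> inv x \<in> H" using H gens[OF inv] x f by (simp add: normal_inv_iff)
  then show ?case
    using commutator_inv_left[OF x f] H normal_imp_subgroup subgroup.m_inv_closed by metis
next
  case (eng a1 a2)
  have a: "a1 \<in> carrier G" "a2 \<in> carrier G" using eng.hyps generate_in_carrier[OF Gen] by auto
  have "inv a2 \<otimes> commutator G a1 f \<otimes> a2 \<in> H"
    using normal.inv_op_closed1[OF H a(2) eng.IH(1)] .
  then show ?case
    using commutator_mult_left[OF a f] eng.IH(2) H normal_imp_subgroup subgroup.m_closed by metis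
qed

lemma comm_subgroup_normal_closure_subset:
  assumes H: "H \<lhd> G" and R: "R \<subseteq> carrier G"
    and gens: "\<And>r f. r \<in> R \<Longrightarrow> f \<in> carrier G \<Longrightarrow> commutator G r f \<in> H"
  shows "comm_subgroup G (normal_closure G R) (carrier G) \<subseteq> H"
  unfolding comm_subgroup_eq_generate_commutators
proof (rule generate_subgroup_incl)
  show "subgroup H G" using H by (rule normal_imp_subgroup)
  let ?Gen = "{g \<otimes> r \<otimes> inv g | g r. g \<in> carrier G \<and> r \<in> R}"
  have Gen: "?Gen \<subseteq> carrier G" using R by auto
  have conj_gens: "commutator G x f \<in> H" if x: "x \<in> ?Gen" and f: "f \<in> carrier G" for x f
  proof -
    obtain g r where xg: "x = g \<otimes> r \<otimes> inv g" and g: "g \<in> carrier G" and r: "r \<in> R" using x by blast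
    have "g \<otimes> commutator G r (inv g \<otimes> f \<otimes> g) \<otimes> inv g \<in> H"
      using H gens[OF r] g f by (simp add: normal_inv_iff)
    then show ?thesis
      using commutator_conj_left[OF _ f g, of r] R r xg by auto
  qed
  show "{commutator G a b |a b. a \<in> normal_closure G R \<and> b \<in> carrier G} \<subseteq> H"
    using commutator_generate_left[OF H _ Gen conj_gens] unfolding normal_closure_def by blast
qed

end

section \<open>Quotients and central spans\<close>

lemma (in normal) rcos_eq_self_iff: "x \<in> carrier G \<Longrightarrow> H #> x = H \<longleftrightarrow> x \<in> H"
  using coset_join1 coset_join2 subgroup_axioms by blast

lemma (in normal) kernel_rcoset_hom: "kernel G (G Mod H) ((#>) H) = H"
  unfolding kernel_def using rcos_eq_self_iff subset by auto

lemma (in normal) group_hom_rcoset: "group_hom G (G Mod H) ((#>) H)"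
  by (simp add: group_hom_def group_hom_axioms_def is_group factorgroup_is_group r_coset_hom_Mod)

lemma (in group_hom) hom_eq_imp_mult_inv_in_kernel:
  assumes "a \<in> carrier G" "b \<in> carrier G" "h a = h b"
  shows "a \<otimes>\<^bsub>G\<^esub> inv\<^bsub>G\<^esub> b \<in> kernel G H h"
  using assms by (simp add: kernel_def)

lemma (in normal) central_FactGroup:
  assumes z: "z \<in> carrier G" and comm: "\<forall>g\<in>carrier G. commutator G z g \<in> H"
  shows "group.central (G Mod H) (H #> z)"
proof -
  interpret Q: group "G Mod H" by (rule factorgroup_is_group)
  interpret \<pi>: group_hom G "G Mod H" "(#>) H" by (rule group_hom_rcoset)
  have "(H #> z) \<otimes>\<^bsub>G Mod H\<^esub> (H #> g) = (H #> g) \<otimes>\<^bsub>G Mod H\<^esub> (H #> z)" if g: "g \<in> carrier G" for g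
  proof -
    have "H #> commutator G z g = \<one>\<^bsub>G Mod H\<^esub>"
      using comm g z rcos_eq_self_iff by simp
    then have "commutator (G Mod H) (H #> z) (H #> g) = \<one>\<^bsub>G Mod H\<^esub>"
      using \<pi>.hom_commutator[OF z g] by simp
    then show ?thesis
      using Q.commutator_eq_one_iff \<pi>.hom_closed z g by blast
  qed
  then show ?thesis
    using z unfolding Q.central_def carrier_FactGroup by auto
qed

text \<open>When \<open>h\<close> is the projection onto \<open>G/N\<close>, this is the set of elements congruent modulo \<open>N\<close>
  to a product of powers of the \<open>z\<^sub>l\<close>.\<close>

definition central_span ::
  "('a, 'b) monoid_scheme \<Rightarrow> ('c, 'd) monoid_scheme \<Rightarrow> ('a \<Rightarrow> 'c) \<Rightarrow> ('i \<Rightarrow> 'a) \<Rightarrow> 'i list \<Rightarrow> 'a set" where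
  "central_span G H h z L = {a \<in> carrier G. \<exists>n. h a = pow_prod H (\<lambda>l. h (z l)) L n}"

context group_hom begin

lemma central_span_normal:
  assumes z: "z ` set L \<subseteq> carrier G" and c: "\<forall>l\<in>set L. H.central (h (z l))"
  shows "central_span G H h z L \<lhd> G"
  unfolding G.normal_inv_iff
proof (intro conjI ballI)
  let ?P = "pow_prod H (\<lambda>l. h (z l)) L"
  show "subgroup (central_span G H h z L) G"
  proof (rule G.subgroupI)
    show "central_span G H h z L \<subseteq> carrier G" unfolding central_span_def by blast
    have "?P (\<lambda>l. 0) = \<one>\<^bsub>H\<^esub>" by (rule H.pow_prod_zero) (use z in auto)
    then have "h \<one>\<^bsub>G\<^esub> = ?P (\<lambda>l. 0)" by simp
    then show "central_span G H h z L \<noteq> {}" unfolding central_span_def by blast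
  next
    fix a assume "a \<in> central_span G H h z L"
    then obtain n where a: "a \<in> carrier G" and an: "h a = ?P n" unfolding central_span_def by blast
    have "h (inv\<^bsub>G\<^esub> a) = ?P (\<lambda>l. - n l)" using a an H.pow_prod_uminus[OF c] by simp
    then show "inv\<^bsub>G\<^esub> a \<in> central_span G H h z L" unfolding central_span_def using a by blast
  next
    fix a b assume "a \<in> central_span G H h z L" "b \<in> central_span G H h z L"
    then obtain n m where a: "a \<in> carrier G" "h a = ?P n" and b: "b \<in> carrier G" "h b = ?P m"
      unfolding central_span_def by blast
    have "h (a \<otimes>\<^bsub>G\<^esub> b) = ?P (\<lambda>l. n l + m l)" using a b H.pow_prod_add[OF c] by simp
    then show "a \<otimes>\<^bsub>G\<^esub> b \<in> central_span G H h z L" unfolding central_span_def using a b by blast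
  qed
next
  fix g a assume g: "g \<in> carrier G" and "a \<in> central_span G H h z L"
  then obtain n where a: "a \<in> carrier G" and an: "h a = pow_prod H (\<lambda>l. h (z l)) L n"
    unfolding central_span_def by blast
  have "h (g \<otimes>\<^bsub>G\<^esub> a \<otimes>\<^bsub>G\<^esub> inv\<^bsub>G\<^esub> g) = h g \<otimes>\<^bsub>H\<^esub> h a \<otimes>\<^bsub>H\<^esub> inv\<^bsub>H\<^esub> h g"
    using g a by simp
  also have "\<dots> = h a"
    using H.central_conj[of "h a" "inv\<^bsub>H\<^esub> h g"] H.pow_prod_central[OF c] an g by simp
  finally show "g \<otimes>\<^bsub>G\<^esub> a \<otimes>\<^bsub>G\<^esub> inv\<^bsub>G\<^esub> g \<in> central_span G H h z L"
    unfolding central_span_def using g a an by auto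
qed

lemma central_span_incl:
  assumes "distinct L" "l \<in> set L" "z ` set L \<subseteq> carrier G"
  shows "z l \<in> central_span G H h z L"
proof -
  have "pow_prod H (\<lambda>l. h (z l)) L (\<lambda>k. if k = l then 1 else 0) = h (z l)"
    using assms by (intro H.pow_prod_indicator) auto
  moreover have "z l \<in> carrier G" using assms by auto
  ultimately show ?thesis
    unfolding central_span_def by (auto intro!: exI[of _ "\<lambda>k. if k = l then 1 else 0"])
qed

end

lemma (in normal) central_span_FactGroup_elim:
  assumes a: "a \<in> central_span G (G Mod H) ((#>) H) z L" and z: "z ` set L \<subseteq> carrier G"
  obtains n where "H #> a = pow_prod (G Mod H) (\<lambda>l. H #> z l) L n"
    and "a \<otimes> inv (pow_prod G z L n) \<in> H"
proof -
  interpret \<pi>: group_hom G "G Mod H" "(#>) H" by (rule group_hom_rcoset)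
  obtain n where ac: "a \<in> carrier G" and an: "H #> a = pow_prod (G Mod H) (\<lambda>l. H #> z l) L n"
    using a unfolding central_span_def by blast
  have "H #> a = H #> pow_prod G z L n" using an \<pi>.hom_pow_prod[OF z] by simp
  then have "a \<otimes> inv (pow_prod G z L n) \<in> H"
    using \<pi>.hom_eq_imp_mult_inv_in_kernel[OF ac pow_prod_closed[OF z]] kernel_rcoset_hom by simp
  then show ?thesis using an that by blast
qed

section \<open>Free groups\<close>

lemma free_group_onD:
  assumes "free_group_on F x I"
  shows "group F" and "x ` I \<subseteq> carrier F" and "generate F (x ` I) = carrier F"
    and "\<And>w. w \<noteq> [] \<Longrightarrow> set (map fst w) \<subseteq> I \<Longrightarrow> reduced_word w \<Longrightarrow> eval_word F x w \<noteq> \<one>\<^bsub>F\<^esub>"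
  using assms unfolding free_group_on_def by simp_all

fun cancel_push :: "(nat \<times> bool) \<Rightarrow> (nat \<times> bool) list \<Rightarrow> (nat \<times> bool) list" where
  "cancel_push a [] = [a]"
| "cancel_push a (b # w) = (if fst a = fst b \<and> snd a \<noteq> snd b then w else a # b # w)"

definition reduce :: "(nat \<times> bool) list \<Rightarrow> (nat \<times> bool) list" where
  "reduce w = foldr cancel_push w []"

lemma reduce_Nil [simp]: "reduce [] = []"
  by (simp add: reduce_def)

lemma reduce_Cons [simp]: "reduce (a # w) = cancel_push a (reduce w)"
  by (simp add: reduce_def)

lemma reduced_word_tl: "reduced_word (b # w) \<Longrightarrow> reduced_word w"
  by (cases w) auto

lemma reduced_word_cancel_push: "reduced_word w \<Longrightarrow> reduced_word (cancel_push a w)"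
  by (cases w) (auto dest: reduced_word_tl)

lemma reduced_word_reduce: "reduced_word (reduce w)"
  by (induction w) (auto simp: reduced_word_cancel_push)

lemma set_reduce: "set (reduce w) \<subseteq> set w"
proof (induction w)
  case (Cons a w)
  have "set (cancel_push a v) \<subseteq> insert a (set v)" for v
    by (cases v) auto
  then show ?case using Cons by fastforce
qed simp

definition inverse_word :: "(nat \<times> bool) list \<Rightarrow> (nat \<times> bool) list" where
  "inverse_word w = rev (map (\<lambda>(i, b). (i, \<not> b)) w)"

lemma inverse_word_Nil [simp]: "inverse_word [] = []"
  by (simp add: inverse_word_def)

lemma inverse_word_Cons [simp]: "inverse_word ((i, b) # w) = inverse_word w @ [(i, \<not> b)]"
  by (simp add: inverse_word_def)

lemma letters_inverse_word [simp]: "fst ` set (inverse_word w) = fst ` set w"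
  unfolding inverse_word_def by (simp add: image_image case_prod_beta)

context plain_group begin

lemma eval_word_closed:
  "x ` I \<subseteq> carrier G \<Longrightarrow> fst ` set w \<subseteq> I \<Longrightarrow> eval_word G x w \<in> carrier G"
  by (induction w) auto

lemma eval_word_append:
  "x ` I \<subseteq> carrier G \<Longrightarrow> fst ` set w \<subseteq> I \<Longrightarrow> fst ` set w' \<subseteq> I \<Longrightarrow>
   eval_word G x (w @ w') = eval_word G x w \<otimes> eval_word G x w'"
  by (induction w) (auto simp: eval_word_closed[of x I] m_assoc image_subset_iff)

lemma eval_word_cancel_push:
  assumes x: "x ` I \<subseteq> carrier G" and w: "fst ` set (a # w) \<subseteq> I"
  shows "eval_word G x (cancel_push a w) = eval_word G x (a # w)"
proof (cases w)
  case (Cons b w')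
  obtain i p j q where ab: "a = (i, p)" "b = (j, q)" by (cases a, cases b)
  have "x i \<in> carrier G" "x j \<in> carrier G" "eval_word G x w' \<in> carrier G"
    using w x Cons ab by (auto intro!: eval_word_closed[OF x])
  then show ?thesis
    using ab Cons by (cases p) (auto simp: m_assoc[symmetric])
qed simp

lemma eval_word_reduce:
  "x ` I \<subseteq> carrier G \<Longrightarrow> fst ` set w \<subseteq> I \<Longrightarrow> eval_word G x (reduce w) = eval_word G x w"
proof (induction w)
  case (Cons a w)
  have "fst ` set (a # reduce w) \<subseteq> I" using Cons set_reduce[of w] by auto
  then have "eval_word G x (reduce (a # w)) = eval_word G x (a # reduce w)"
    using eval_word_cancel_push[OF Cons.prems(1)] by simp
  also have "\<dots> = eval_word G x (a # w)" using Cons by (cases a) auto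
  finally show ?case .
qed simp

lemma eval_inverse_word:
  "x ` I \<subseteq> carrier G \<Longrightarrow> fst ` set w \<subseteq> I \<Longrightarrow> eval_word G x (inverse_word w) = inv (eval_word G x w)"
proof (induction w)
  case (Cons a w)
  obtain i b where a: "a = (i, b)" by (cases a)
  have "x i \<in> carrier G" "eval_word G x w \<in> carrier G"
    using Cons a eval_word_closed[of x I w] by auto
  then show ?case
    using Cons a by (cases b) (auto simp: eval_word_append[of x I] inv_mult_group)
qed simp

lemma generate_eq_eval_words:
  "g \<in> generate G (x ` I) \<Longrightarrow> x ` I \<subseteq> carrier G \<Longrightarrow> \<exists>w. fst ` set w \<subseteq> I \<and> eval_word G x w = g"
proof (induction rule: generate.induct)
  case one
  then show ?case by (intro exI[of _ "[]"]) simp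
next
  case (incl h)
  then obtain i where "i \<in> I" "h = x i" by auto
  then show ?case using incl by (intro exI[of _ "[(i, False)]"]) auto
next
  case (inv h)
  then obtain i where "i \<in> I" "h = x i" by auto
  then show ?case using inv by (intro exI[of _ "[(i, True)]"]) auto
next
  case (eng h1 h2)
  then obtain w1 w2 where "fst ` set w1 \<subseteq> I" "eval_word G x w1 = h1"
    "fst ` set w2 \<subseteq> I" "eval_word G x w2 = h2" by blast
  then show ?case using eng by (intro exI[of _ "w1 @ w2"]) (auto simp: eval_word_append)
qed

end

text \<open>The reduced form of \<open>w w'\<^sup>-\<^sup>1\<close> evaluates to \<open>1\<close> in the free group, hence is empty.\<close>

lemma free_group_on_eval_word_eq:
  fixes H :: "'b monoid"
  assumes free: "free_group_on F x I" and H: "group H" and y: "y ` I \<subseteq> carrier H"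
    and w: "fst ` set w \<subseteq> I" and w': "fst ` set w' \<subseteq> I"
    and eq: "eval_word F x w = eval_word F x w'"
  shows "eval_word H y w = eval_word H y w'"
proof -
  interpret F: plain_group F using free_group_onD(1)[OF free] by (rule plain_group.intro)
  interpret H: plain_group H using H by (rule plain_group.intro)
  note x = free_group_onD(2)[OF free]
  define u where "u = w @ inverse_word w'"
  have u: "fst ` set u \<subseteq> I" using w w' by (simp add: u_def image_Un)
  have eval_u: "eval_word G x u = eval_word G x w \<otimes>\<^bsub>G\<^esub> inv\<^bsub>G\<^esub> (eval_word G x w')"
    if G: "plain_group G" and x: "x ` I \<subseteq> carrier G" for G :: "'d monoid" and x
  proof -
    have "eval_word G x u = eval_word G x w \<otimes>\<^bsub>G\<^esub> eval_word G x (inverse_word w')"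
      unfolding u_def using w' by (intro plain_group.eval_word_append[OF G x w]) simp
    then show ?thesis using plain_group.eval_inverse_word[OF G x w'] by simp
  qed
  have "eval_word F x (reduce u) = eval_word F x w \<otimes>\<^bsub>F\<^esub> inv\<^bsub>F\<^esub> (eval_word F x w')"
    using F.eval_word_reduce[OF x u] eval_u[OF F.plain_group_axioms x] by simp
  also have "\<dots> = \<one>\<^bsub>F\<^esub>" using eq F.eval_word_closed[OF x w'] by simp
  finally have "eval_word F x (reduce u) = \<one>\<^bsub>F\<^esub>" .
  moreover have "set (map fst (reduce u)) \<subseteq> I" using set_reduce[of u] u by auto
  ultimately have "reduce u = []"
    using free_group_onD(4)[OF free _ _ reduced_word_reduce] by blast
  then have "\<one>\<^bsub>H\<^esub> = eval_word H y w \<otimes>\<^bsub>H\<^esub> inv\<^bsub>H\<^esub> (eval_word H y w')"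
    using H.eval_word_reduce[OF y u] eval_u[OF H.plain_group_axioms y] by simp
  then show ?thesis
    using H.inv_solve_right[of "\<one>\<^bsub>H\<^esub>"] H.eval_word_closed[OF y w] H.eval_word_closed[OF y w'] by simp
qed

lemma free_group_on_hom:
  fixes H :: "'b monoid"
  assumes free: "free_group_on F x I" and H: "group H" and y: "y ` I \<subseteq> carrier H"
  shows "\<exists>\<phi>. \<phi> \<in> hom F H \<and> (\<forall>i\<in>I. \<phi> (x i) = y i)"
proof -
  interpret F: plain_group F using free_group_onD(1)[OF free] by (rule plain_group.intro)
  interpret H: plain_group H using H by (rule plain_group.intro)
  note x = free_group_onD(2)[OF free] and gen = free_group_onD(3)[OF free]
  define word where "word g = (SOME w. fst ` set w \<subseteq> I \<and> eval_word F x w = g)" for g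
  define \<phi> where "\<phi> g = eval_word H y (word g)" for g
  have word: "fst ` set (word g) \<subseteq> I \<and> eval_word F x (word g) = g" if "g \<in> carrier F" for g
    unfolding word_def by (rule someI_ex) (use F.generate_eq_eval_words[OF _ x] that gen in simp)
  have \<phi>_eval: "\<phi> (eval_word F x w) = eval_word H y w" if w: "fst ` set w \<subseteq> I" for w
  proof -
    note ww = word[OF F.eval_word_closed[OF x w]]
    show ?thesis
      unfolding \<phi>_def using free_group_on_eval_word_eq[OF free H y conjunct1[OF ww] w conjunct2[OF ww]] .
  qed
  have "\<phi> \<in> hom F H"
  proof (rule homI)
    fix g assume "g \<in> carrier F"
    then show "\<phi> g \<in> carrier H" unfolding \<phi>_def using word H.eval_word_closed[OF y] by blast
  next
    fix g h assume g: "g \<in> carrier F" and h: "h \<in> carrier F"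
    have wgh: "fst ` set (word g @ word h) \<subseteq> I" using word[OF g] word[OF h] by (simp add: image_Un)
    have "g \<otimes>\<^bsub>F\<^esub> h = eval_word F x (word g @ word h)"
      using word[OF g] word[OF h] F.eval_word_append[OF x] by simp
    then have "\<phi> (g \<otimes>\<^bsub>F\<^esub> h) = eval_word H y (word g @ word h)"
      using \<phi>_eval[OF wgh] by simp
    also have "\<dots> = \<phi> g \<otimes>\<^bsub>H\<^esub> \<phi> h"
      unfolding \<phi>_def using word[OF g] word[OF h] H.eval_word_append[OF y] by simp
    finally show "\<phi> (g \<otimes>\<^bsub>F\<^esub> h) = \<phi> g \<otimes>\<^bsub>H\<^esub> \<phi> h" .
  qed
  moreover have "\<phi> (x i) = y i" if "i \<in> I" for i
    using \<phi>_eval[of "[(i, False)]"] that x y by (auto simp: image_subset_iff)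
  ultimately show ?thesis by blast
qed

section \<open>A nilpotent group of class two\<close>

text \<open>Pairs \<open>(u, c)\<close> of an integer vector and an integer matrix with
  \<open>(u, c) (v, d) = (u + v, c + d + u v\<^sup>T)\<close>. Commutators are \<open>(0, u v\<^sup>T - v u\<^sup>T)\<close>, so a
  homomorphism into this group maps \<open>\<gamma>\<^sub>2\<close> into the second factor and kills \<open>\<gamma>\<^sub>3\<close>.\<close>

definition heis :: "((nat \<Rightarrow> int) \<times> (nat \<Rightarrow> nat \<Rightarrow> int)) monoid" where
  "heis = \<lparr>carrier = UNIV,
     monoid.mult = (\<lambda>u v. (\<lambda>i. fst u i + fst v i, \<lambda>i j. snd u i j + snd v i j + fst u i * fst v j)),
     monoid.one = (\<lambda>i. 0, \<lambda>i j. 0)\<rparr>"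

lemma heis_carrier [simp]: "carrier heis = UNIV"
  by (simp add: heis_def)

lemma heis_mult:
  "u \<otimes>\<^bsub>heis\<^esub> v = (\<lambda>i. fst u i + fst v i, \<lambda>i j. snd u i j + snd v i j + fst u i * fst v j)"
  by (simp add: heis_def)

lemma heis_one: "\<one>\<^bsub>heis\<^esub> = (\<lambda>i. 0, \<lambda>i j. 0)"
  by (simp add: heis_def)

lemma heis_group: "group heis"
proof (rule groupI)
  fix u :: "(nat \<Rightarrow> int) \<times> (nat \<Rightarrow> nat \<Rightarrow> int)"
  show "\<exists>v\<in>carrier heis. v \<otimes>\<^bsub>heis\<^esub> u = \<one>\<^bsub>heis\<^esub>"
    by (rule bexI[of _ "(\<lambda>i. - fst u i, \<lambda>i j. - snd u i j + fst u i * fst u j)"])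
      (simp_all add: heis_mult heis_one algebra_simps)
qed (simp_all add: heis_mult heis_one algebra_simps)

interpretation heis: plain_group heis
  by (rule plain_group.intro[OF heis_group])

lemma heis_inv: "inv\<^bsub>heis\<^esub> u = (\<lambda>i. - fst u i, \<lambda>i j. - snd u i j + fst u i * fst u j)"
  by (rule heis.inv_equality) (simp_all add: heis_mult heis_one algebra_simps)

lemma heis_commutator:
  "commutator heis u v = (\<lambda>i. 0, \<lambda>i j. fst u i * fst v j - fst v i * fst u j)"
  by (simp add: commutator_def heis_mult heis_inv algebra_simps)

lemma fst_heis_mult: "fst (u \<otimes>\<^bsub>heis\<^esub> v) = (\<lambda>i. fst u i + fst v i)"
  by (simp add: heis_mult)

lemma fst_heis_nat_pow: "fst (u [^]\<^bsub>heis\<^esub> (n::nat)) = (\<lambda>i. int n * fst u i)"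
  by (induction n) (simp_all add: heis_one fst_heis_mult algebra_simps)

lemma fst_heis_int_pow: "fst (u [^]\<^bsub>heis\<^esub> (k::int)) = (\<lambda>i. k * fst u i)"
  by (simp add: int_pow_def2 heis_inv fst_heis_nat_pow del: pow_nat)

lemma heis_int_pow_of_fst_zero: "(\<lambda>i. 0, c) [^]\<^bsub>heis\<^esub> (k::int) = (\<lambda>i. 0, \<lambda>i j. k * c i j)"
proof -
  have nat_pow: "(\<lambda>i. 0, c) [^]\<^bsub>heis\<^esub> (n::nat) = (\<lambda>i. 0, \<lambda>i j. int n * c i j)" for n
    by (induction n) (simp_all add: heis_one heis_mult algebra_simps)
  show ?thesis
    by (simp add: int_pow_def2 heis_inv nat_pow del: pow_nat)
qed

lemma fst_heis_pow_prod:
  "fst (pow_prod heis w L n) = (\<lambda>i. \<Sum>l\<leftarrow>L. n l * fst (w l) i)"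
  by (induction L) (simp_all add: heis_one fst_heis_mult fst_heis_int_pow)

lemma heis_pow_prod_of_fst_zero:
  "\<forall>l\<in>set L. fst (w l) = (\<lambda>i. 0) \<Longrightarrow>
   pow_prod heis w L n = (\<lambda>i. 0, \<lambda>i j. \<Sum>l\<leftarrow>L. n l * snd (w l) i j)"
proof (induction L)
  case (Cons a L)
  have "w a = (\<lambda>i. 0, snd (w a))" using Cons.prems by (metis list.set_intros(1) prod.collapse)
  then have "w a [^]\<^bsub>heis\<^esub> n a = (\<lambda>i. 0, \<lambda>i j. n a * snd (w a) i j)"
    using heis_int_pow_of_fst_zero by metis
  then show ?case using Cons by (simp add: heis_mult)
qed (simp add: heis_one)

context plain_group begin

lemma heis_hom_fst_lower_central_2:
  assumes h: "h \<in> hom G heis" and g: "g \<in> lower_central G 2"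
  shows "fst (h g) = (\<lambda>i. 0)"
proof -
  interpret h: group_hom G heis h
    using h by (simp add: group_hom_def group_hom_axioms_def is_group heis_group)
  define K where "K = {g \<in> carrier G. fst (h g) = (\<lambda>i. 0)}"
  have "subgroup K G"
  proof (rule subgroupI)
    show "K \<subseteq> carrier G" unfolding K_def by blast
    have "fst (h \<one>) = (\<lambda>i. 0)" by (simp add: heis_one)
    then show "K \<noteq> {}" unfolding K_def by blast
  next
    fix a b assume "a \<in> K" "b \<in> K"
    then show "inv a \<in> K" "a \<otimes> b \<in> K" unfolding K_def by (auto simp: heis_inv fst_heis_mult)
  qed
  moreover have "commutator G a b \<in> K" if "a \<in> carrier G" "b \<in> carrier G" for a b
    unfolding K_def using that by (simp add: h.hom_commutator heis_commutator)
  ultimately have "lower_central G 2 \<subseteq> K"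
    unfolding lower_central_2 comm_subgroup_eq_generate_commutators
    by (intro generate_subgroup_incl) blast+
  then show ?thesis using g K_def by blast
qed

lemma heis_hom_lower_central_3:
  assumes h: "h \<in> hom G heis" and g: "g \<in> lower_central G 3"
  shows "h g = \<one>\<^bsub>heis\<^esub>"
proof -
  interpret h: group_hom G heis h
    using h by (simp add: group_hom_def group_hom_axioms_def is_group heis_group)
  have "lower_central G 2 \<subseteq> carrier G"
    unfolding lower_central_2 comm_subgroup_eq_generate_commutators
    by (intro generate_incl) auto
  then have "commutator G a b \<in> kernel G heis h" if a: "a \<in> lower_central G 2" and b: "b \<in> carrier G" for a b
    using heis_hom_fst_lower_central_2[OF h a] a b
    by (auto simp: kernel_def h.hom_commutator heis_commutator heis_one)
  then have "lower_central G 3 \<subseteq> kernel G heis h"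
    unfolding lower_central_3 comm_subgroup_eq_generate_commutators
    by (intro generate_subgroup_incl h.subgroup_kernel) blast
  then show ?thesis using g unfolding kernel_def by blast
qed

end

lemma coprime_cross_mult_eq:
  fixes a b u v :: int
  assumes "coprime a b" "b \<noteq> 0" "u * a = v * b"
  shows "\<exists>m. u = b * m \<and> v = a * m"
proof -
  have "b dvd u * a" using assms(3) by simp
  then obtain m where u: "u = b * m"
    using assms(1) by (metis coprime_commute coprime_dvd_mult_left_iff dvdE)
  then have "v = a * m" using assms(2,3) by (simp add: algebra_simps)
  then show ?thesis using u by blast
qed

lemma sum_list_two_points:
  assumes "distinct L" "p \<in> set L" "q \<in> set L" "p \<noteq> q"
    and "\<And>l. l \<in> set L \<Longrightarrow> l \<noteq> p \<Longrightarrow> l \<noteq> q \<Longrightarrow> f l = (0::'a::comm_monoid_add)"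
  shows "sum_list (map f L) = f p + f q"
proof -
  have "sum_list (map f L) = sum f (set L)" using assms(1) by (simp add: sum_list_distinct_conv_sum_set)
  also have "\<dots> = sum f {p, q}" using assms by (intro sum.mono_neutral_right) auto
  finally show ?thesis using assms(4) by simp
qed

lemma sum_list_one_point:
  assumes "distinct L" "p \<in> set L" and "\<And>l. l \<in> set L \<Longrightarrow> l \<noteq> p \<Longrightarrow> f l = (0::'a::comm_monoid_add)"
  shows "sum_list (map f L) = f p"
proof -
  have "sum_list (map f L) = sum f (set L)" using assms(1) by (simp add: sum_list_distinct_conv_sum_set)
  also have "\<dots> = sum f {p}" using assms by (intro sum.mono_neutral_right) auto
  finally show ?thesis by simp
qed

lemma distinct_concat_swap_pairs:
  fixes ps :: "('a::order \<times> 'a) list"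
  shows "distinct ps \<Longrightarrow> \<forall>p\<in>set ps. fst p < snd p \<Longrightarrow>
   distinct (concat (map (\<lambda>(i, j). [(i, j), (j, i)]) ps))"
proof (induction ps)
  case (Cons p ps)
  obtain a b where p: "p = (a, b)" by (cases p)
  have ab: "a < b" using Cons.prems p by auto
  have "(a, b) \<notin> set (concat (map (\<lambda>(i, j). [(i, j), (j, i)]) ps))"
    "(b, a) \<notin> set (concat (map (\<lambda>(i, j). [(i, j), (j, i)]) ps))"
    using Cons.prems p ab by auto
  then show ?case using Cons p by auto
qed simp

section \<open>Free products of cyclic groups of coprime orders\<close>

definition unit_vec :: "nat \<Rightarrow> nat \<Rightarrow> int" where
  "unit_vec i k = (if k = i then 1 else 0)"

locale cyclic_free_product = plain_group F for F :: "'a monoid" (structure) +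
  fixes x :: "nat \<Rightarrow> 'a" and t :: nat and r :: "nat \<Rightarrow> nat" and S :: "'a set"
  assumes r_pos: "\<forall>i\<in>{1..t}. r i > 0"
    and r_coprime: "\<forall>i\<in>{1..t}. \<forall>j\<in>{1..t}. i \<noteq> j \<longrightarrow> gcd (r i) (r j) = 1"
    and free: "free_group_on F x {1..t}"
    and S_eq: "S = normal_closure F {x i [^] r i | i. i \<in> {1..t}}"
begin

definition relator :: "nat \<Rightarrow> 'a" where
  "relator i = x i [^] r i"

definition indices :: "nat list" where
  "indices = [1..<t+1]"

definition coord_hom :: "'a \<Rightarrow> (nat \<Rightarrow> int) \<times> (nat \<Rightarrow> nat \<Rightarrow> int)" where
  "coord_hom = (SOME \<phi>. \<phi> \<in> hom F heis \<and> (\<forall>i\<in>{1..t}. \<phi> (x i) = (unit_vec i, \<lambda>p q. 0)))"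

lemma set_indices [simp]: "set indices = {1..t}"
  by (auto simp: indices_def)

lemma distinct_indices [simp]: "distinct indices"
  by (simp add: indices_def)

lemma x_carrier: "i \<in> {1..t} \<Longrightarrow> x i \<in> carrier F"
  using free_group_onD(2)[OF free] by auto

lemma relator_carrier: "i \<in> {1..t} \<Longrightarrow> relator i \<in> carrier F"
  by (simp add: relator_def x_carrier)

lemma S_eq_relators: "S = normal_closure F (relator ` {1..t})"
  unfolding S_eq relator_def[abs_def] by (simp only: Setcompr_eq_image)

lemma S_normal: "S \<lhd> F"
  unfolding S_eq_relators by (rule normal_closure_normal) (auto simp: relator_carrier)

lemma S_carrier: "S \<subseteq> carrier F"
  using S_normal normal_imp_subgroup subgroup.subset by blast

lemma relator_in_S: "i \<in> {1..t} \<Longrightarrow> relator i \<in> S"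
  unfolding S_eq_relators using normal_closure_incl[of "relator ` {1..t}"] relator_carrier by blast

lemma rho_2_normal: "rho F S 2 \<lhd> F"
  unfolding rho_2 by (rule comm_subgroup_normal[OF S_normal])

lemma rho_3_normal: "rho F S 3 \<lhd> F"
  unfolding rho_3 by (rule comm_subgroup_normal[OF rho_2_normal])

lemma rho_2_subset_S: "rho F S 2 \<subseteq> S"
  unfolding rho_2 by (rule comm_subgroup_subset[OF S_normal])

lemma rho_3_subset_rho_2: "rho F S 3 \<subseteq> rho F S 2"
  unfolding rho_3 by (rule comm_subgroup_subset[OF rho_2_normal])

lemma rho_2_subset_lower_central_2: "rho F S 2 \<subseteq> lower_central F 2"
  unfolding rho_2 lower_central_2 by (rule comm_subgroup_mono[OF S_carrier])

lemma rho_3_subset_lower_central_3: "rho F S 3 \<subseteq> lower_central F 3"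
  unfolding rho_3 lower_central_3 by (rule comm_subgroup_mono[OF rho_2_subset_lower_central_2])

lemma coord_hom: "coord_hom \<in> hom F heis" "i \<in> {1..t} \<Longrightarrow> coord_hom (x i) = (unit_vec i, \<lambda>p q. 0)"
proof -
  have "\<exists>\<phi>. \<phi> \<in> hom F heis \<and> (\<forall>i\<in>{1..t}. \<phi> (x i) = (unit_vec i, \<lambda>p q. 0))"
    by (rule free_group_on_hom[OF free heis_group]) simp
  then have "coord_hom \<in> hom F heis \<and> (\<forall>i\<in>{1..t}. coord_hom (x i) = (unit_vec i, \<lambda>p q. 0))"
    unfolding coord_hom_def by (rule someI_ex)
  then show "coord_hom \<in> hom F heis" "i \<in> {1..t} \<Longrightarrow> coord_hom (x i) = (unit_vec i, \<lambda>p q. 0)"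
    by auto
qed

sublocale coord: group_hom F heis coord_hom
  by (simp add: group_hom_def group_hom_axioms_def is_group heis_group coord_hom(1))

lemma fst_coord_relator: "i \<in> {1..t} \<Longrightarrow> fst (coord_hom (relator i)) = (\<lambda>k. int (r i) * unit_vec i k)"
  by (simp add: relator_def x_carrier coord_hom(2) coord.hom_nat_pow fst_heis_nat_pow)

lemma coord_commutator_relator:
  assumes "i \<in> {1..t}" "j \<in> {1..t}"
  shows "coord_hom (commutator F (relator i) (x j))
    = (\<lambda>k. 0, \<lambda>p q. int (r i) * (unit_vec i p * unit_vec j q - unit_vec j p * unit_vec i q))"
  using assms by (simp add: coord.hom_commutator relator_carrier x_carrier heis_commutator
      fst_coord_relator coord_hom(2) algebra_simps)

lemma relator_central_mod_rho_2:
  "i \<in> {1..t} \<Longrightarrow> group.central (F Mod rho F S 2) (rho F S 2 #> relator i)"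
  by (rule normal.central_FactGroup[OF rho_2_normal relator_carrier])
    (auto simp: rho_2 intro!: commutator_in_comm_subgroup relator_in_S)

lemma S_subset_central_span:
  "S \<subseteq> central_span F (F Mod rho F S 2) ((#>) (rho F S 2)) relator indices"
proof -
  interpret \<pi>: group_hom F "F Mod rho F S 2" "(#>) (rho F S 2)"
    by (rule normal.group_hom_rcoset[OF rho_2_normal])
  have rel: "relator ` set indices \<subseteq> carrier F" by (auto simp: relator_carrier)
  have "normal_closure F (relator ` {1..t})
      \<subseteq> central_span F (F Mod rho F S 2) ((#>) (rho F S 2)) relator indices"
  proof (rule normal_closure_subset[OF \<pi>.central_span_normal[OF rel]])
    show "\<forall>l\<in>set indices. group.central (F Mod rho F S 2) (rho F S 2 #> relator l)"
      by (auto intro: relator_central_mod_rho_2)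
    show "relator ` {1..t} \<subseteq> central_span F (F Mod rho F S 2) ((#>) (rho F S 2)) relator indices"
      using \<pi>.central_span_incl[OF distinct_indices _ rel] by auto
  qed
  then show ?thesis by (simp only: S_eq_relators[symmetric])
qed

lemma S_inter_lower_central_2: "S \<inter> lower_central F 2 \<subseteq> rho F S 2"
proof
  fix s assume s: "s \<in> S \<inter> lower_central F 2"
  let ?L = "indices" and ?N = "rho F S 2"
  have rel: "relator ` set ?L \<subseteq> carrier F" by (auto simp: relator_carrier)
  obtain n where sn: "?N #> s = pow_prod (F Mod ?N) (\<lambda>l. ?N #> relator l) ?L n"
    and k: "s \<otimes> inv (pow_prod F relator ?L n) \<in> ?N"
    using normal.central_span_FactGroup_elim[OF rho_2_normal _ rel] S_subset_central_span s by blast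
  let ?P = "pow_prod F relator ?L n"
  have P: "?P \<in> carrier F" by (rule pow_prod_closed[OF rel])
  have sc: "s \<in> carrier F" using s S_carrier by blast
  have "coord_hom s = coord_hom ((s \<otimes> inv ?P) \<otimes> ?P)" using sc P by (simp add: m_assoc)
  also have "\<dots> = coord_hom (s \<otimes> inv ?P) \<otimes>\<^bsub>heis\<^esub> coord_hom ?P" using sc P by simp
  finally have "fst (coord_hom s) = (\<lambda>k. fst (coord_hom (s \<otimes> inv ?P)) k + fst (coord_hom ?P) k)"
    by (simp add: fst_heis_mult)
  moreover have "fst (coord_hom s) = (\<lambda>k. 0)" "fst (coord_hom (s \<otimes> inv ?P)) = (\<lambda>k. 0)"
    using heis_hom_fst_lower_central_2[OF coord_hom(1)] s k rho_2_subset_lower_central_2 by auto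
  ultimately have P0: "fst (coord_hom ?P) = (\<lambda>k. 0)" by (simp add: fun_eq_iff)
  have "n i = 0" if i: "i \<in> set ?L" for i
  proof -
    have "fst (coord_hom ?P) i = (\<Sum>l\<leftarrow>?L. n l * fst (coord_hom (relator l)) i)"
      by (simp only: coord.hom_pow_prod[OF rel] fst_heis_pow_prod)
    also have "\<dots> = n i * int (r i)"
      using i by (subst sum_list_one_point[of _ i]) (auto simp: fst_coord_relator unit_vec_def)
    finally have "n i * int (r i) = 0" using P0 by simp
    moreover have "r i > 0" using r_pos i by simp
    ultimately show ?thesis by simp
  qed
  then have "?N #> s = \<one>\<^bsub>F Mod ?N\<^esub>"
    unfolding sn using rel
    by (intro group.pow_prod_zero[OF normal.factorgroup_is_group[OF rho_2_normal]])
      (auto simp: carrier_FactGroup relator_carrier)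
  then show "s \<in> ?N"
    using normal.rcos_eq_self_iff[OF rho_2_normal sc] by simp
qed

definition pairs :: "(nat \<times> nat) list" where
  "pairs = filter (\<lambda>p. fst p < snd p) (List.product indices indices)"

text \<open>Listing \<open>(i, j)\<close> next to \<open>(j, i)\<close> lets the product over \<open>offdiag\<close> be grouped into these
  pairs, each of which is trivial modulo \<open>\<rho>\<^sub>3(S)\<close> once the exponents satisfy the relation.\<close>

definition offdiag :: "(nat \<times> nat) list" where
  "offdiag = concat (map (\<lambda>(i, j). [(i, j), (j, i)]) pairs)"

definition relator_comm :: "nat \<times> nat \<Rightarrow> 'a" where
  "relator_comm p = commutator F (relator (fst p)) (x (snd p))"

lemma set_pairs: "set pairs = {(i, j). i \<in> {1..t} \<and> j \<in> {1..t} \<and> i < j}"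
  by (auto simp: pairs_def)

lemma set_offdiag: "set offdiag = {(i, j). i \<in> {1..t} \<and> j \<in> {1..t} \<and> i \<noteq> j}"
  by (auto simp: offdiag_def set_pairs nat_neq_iff)

lemma distinct_offdiag: "distinct offdiag"
  unfolding offdiag_def
  by (rule distinct_concat_swap_pairs) (auto simp: set_pairs pairs_def distinct_product)

lemma relator_comm_carrier: "p \<in> set offdiag \<Longrightarrow> relator_comm p \<in> carrier F"
  by (auto simp: relator_comm_def set_offdiag relator_carrier x_carrier)

lemma relator_comm_in_rho_2: "p \<in> set offdiag \<Longrightarrow> relator_comm p \<in> rho F S 2"
  unfolding rho_2 relator_comm_def set_offdiag
  by (auto intro!: commutator_in_comm_subgroup relator_in_S x_carrier)

lemma relator_comm_central_mod_rho_3: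
  "p \<in> set offdiag \<Longrightarrow> group.central (F Mod rho F S 3) (rho F S 3 #> relator_comm p)"
  by (rule normal.central_FactGroup[OF rho_3_normal relator_comm_carrier])
    (auto simp: rho_3 intro!: commutator_in_comm_subgroup relator_comm_in_rho_2)

lemma commutator_relator_x_self: "i \<in> {1..t} \<Longrightarrow> commutator F (relator i) (x i) = \<one>"
  using x_carrier[of i] by (simp add: commutator_eq_one_iff relator_def nat_pow_Suc2[symmetric])

lemma rho_2_subset_central_span:
  "rho F S 2 \<subseteq> central_span F (F Mod rho F S 3) ((#>) (rho F S 3)) relator_comm offdiag"
proof -
  interpret \<pi>: group_hom F "F Mod rho F S 3" "(#>) (rho F S 3)"
    by (rule normal.group_hom_rcoset[OF rho_3_normal])
  let ?T = "central_span F (F Mod rho F S 3) ((#>) (rho F S 3)) relator_comm offdiag"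
  have z: "relator_comm ` set offdiag \<subseteq> carrier F" using relator_comm_carrier by blast
  have T: "?T \<lhd> F"
    using \<pi>.central_span_normal[OF z] relator_comm_central_mod_rho_3 by blast
  have gens: "commutator F (relator i) (x j) \<in> ?T" if "i \<in> {1..t}" "j \<in> {1..t}" for i j
  proof (cases "i = j")
    case True
    then show ?thesis
      using that commutator_relator_x_self T normal_imp_subgroup subgroup.one_closed by metis
  next
    case False
    then have "(i, j) \<in> set offdiag" using that by (simp add: set_offdiag)
    then show ?thesis
      using \<pi>.central_span_incl[OF distinct_offdiag _ z, of "(i, j)"] by (simp add: relator_comm_def)
  qed
  have "commutator F r f \<in> ?T" if r: "r \<in> relator ` {1..t}" and f: "f \<in> carrier F" for r f
  proof -
    obtain i where i: "i \<in> {1..t}" and ri: "r = relator i" using r by blast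
    show ?thesis
      using commutator_generate_right[OF T relator_carrier[OF i] _ _ f[folded free_group_onD(3)[OF free]]]
        gens[OF i] x_carrier ri by blast
  qed
  then have "comm_subgroup F (normal_closure F (relator ` {1..t})) (carrier F) \<subseteq> ?T"
    by (intro comm_subgroup_normal_closure_subset[OF T]) (auto simp: relator_carrier)
  then show ?thesis
    by (simp only: rho_2 S_eq_relators[symmetric])
qed

lemma exponent_relation:
  assumes P: "coord_hom (pow_prod F relator_comm offdiag n) = \<one>\<^bsub>heis\<^esub>" and ij: "(i, j) \<in> set offdiag"
  shows "n (i, j) * int (r i) = n (j, i) * int (r j)"
proof -
  have i: "i \<in> {1..t}" and j: "j \<in> {1..t}" and "i \<noteq> j" using ij by (auto simp: set_offdiag)
  have coord_l: "coord_hom (relator_comm l)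
      = (\<lambda>k. 0, \<lambda>p q. int (r (fst l)) * (unit_vec (fst l) p * unit_vec (snd l) q - unit_vec (snd l) p * unit_vec (fst l) q))"
    if "l \<in> set offdiag" for l
    using that coord_commutator_relator by (auto simp: relator_comm_def set_offdiag)
  have z: "relator_comm ` set offdiag \<subseteq> carrier F" using relator_comm_carrier by blast
  have "coord_hom (pow_prod F relator_comm offdiag n)
      = (\<lambda>k. 0, \<lambda>p q. \<Sum>l\<leftarrow>offdiag. n l * snd (coord_hom (relator_comm l)) p q)"
    unfolding coord.hom_pow_prod[OF z] by (rule heis_pow_prod_of_fst_zero) (simp add: coord_l)
  then have "0 = (\<Sum>l\<leftarrow>offdiag. n l * snd (coord_hom (relator_comm l)) i j)"
    using P by (simp add: heis_one fun_eq_iff)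
  also have "\<dots> = n (i, j) * snd (coord_hom (relator_comm (i, j))) i j
      + n (j, i) * snd (coord_hom (relator_comm (j, i))) i j"
    using ij \<open>i \<noteq> j\<close> by (intro sum_list_two_points distinct_offdiag)
      (auto simp: set_offdiag coord_l unit_vec_def)
  also have "\<dots> = n (i, j) * int (r i) - n (j, i) * int (r j)"
    using ij \<open>i \<noteq> j\<close> by (simp add: coord_l set_offdiag unit_vec_def)
  finally show ?thesis by simp
qed

abbreviation (input) Q3 :: "'a set monoid" where
  "Q3 \<equiv> F Mod rho F S 3"

lemma relator_comm_pow_mod_rho_3:
  assumes "(i, j) \<in> set offdiag"
  shows "(rho F S 3 #> relator_comm (i, j)) [^]\<^bsub>Q3\<^esub> r j = rho F S 3 #> commutator F (relator i) (relator j)"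
proof -
  interpret \<pi>: group_hom F Q3 "(#>) (rho F S 3)" by (rule normal.group_hom_rcoset[OF rho_3_normal])
  have i: "i \<in> {1..t}" and j: "j \<in> {1..t}" using assms by (auto simp: set_offdiag)
  have c: "\<pi>.H.central (commutator Q3 (rho F S 3 #> relator i) (rho F S 3 #> x j))"
    using relator_comm_central_mod_rho_3[OF assms]
    by (simp add: relator_comm_def \<pi>.hom_commutator relator_carrier[OF i] x_carrier[OF j])
  have "(rho F S 3 #> relator_comm (i, j)) [^]\<^bsub>Q3\<^esub> r j
      = commutator Q3 (rho F S 3 #> relator i) (rho F S 3 #> x j) [^]\<^bsub>Q3\<^esub> r j"
    by (simp add: relator_comm_def \<pi>.hom_commutator relator_carrier[OF i] x_carrier[OF j])
  also have "\<dots> = commutator Q3 (rho F S 3 #> relator i) ((rho F S 3 #> x j) [^]\<^bsub>Q3\<^esub> r j)"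
    using \<pi>.H.commutator_nat_pow_right[OF _ _ c] relator_carrier[OF i] x_carrier[OF j] by simp
  also have "(rho F S 3 #> x j) [^]\<^bsub>Q3\<^esub> r j = rho F S 3 #> relator j"
    by (simp add: relator_def \<pi>.hom_nat_pow x_carrier[OF j])
  also have "commutator Q3 (rho F S 3 #> relator i) (rho F S 3 #> relator j)
      = rho F S 3 #> commutator F (relator i) (relator j)"
    by (rule \<pi>.hom_commutator[symmetric]) (use relator_carrier i j in auto)
  finally show ?thesis .
qed

lemma pow_prod_swap_pair_mod_rho_3:
  assumes ij: "(i, j) \<in> set offdiag" and rel: "n (i, j) * int (r i) = n (j, i) * int (r j)"
  shows "pow_prod Q3 (\<lambda>l. rho F S 3 #> relator_comm l) [(i, j), (j, i)] n = \<one>\<^bsub>Q3\<^esub>"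
proof -
  interpret \<pi>: group_hom F Q3 "(#>) (rho F S 3)" by (rule normal.group_hom_rcoset[OF rho_3_normal])
  have i: "i \<in> {1..t}" and j: "j \<in> {1..t}" and ji: "(j, i) \<in> set offdiag"
    using ij by (auto simp: set_offdiag)
  have "coprime (int (r i)) (int (r j))"
    using r_coprime i j ij by (auto simp: set_offdiag coprime_iff_gcd_eq_1)
  moreover have "int (r j) \<noteq> 0" using r_pos j by simp
  ultimately obtain m where m: "n (i, j) = int (r j) * m" "n (j, i) = int (r i) * m"
    using coprime_cross_mult_eq rel by blast
  define A where "A = (rho F S 3 #> relator_comm (i, j)) [^]\<^bsub>Q3\<^esub> r j"
  define B where "B = (rho F S 3 #> relator_comm (j, i)) [^]\<^bsub>Q3\<^esub> r i"
  have cA: "\<pi>.H.central A" "\<pi>.H.central B"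
    unfolding A_def B_def using relator_comm_central_mod_rho_3 ij ji by (auto intro: \<pi>.H.central_nat_pow)
  have "A \<otimes>\<^bsub>Q3\<^esub> B
      = rho F S 3 #> (commutator F (relator i) (relator j) \<otimes> commutator F (relator j) (relator i))"
    unfolding A_def B_def relator_comm_pow_mod_rho_3[OF ij] relator_comm_pow_mod_rho_3[OF ji]
    by (rule \<pi>.hom_mult[symmetric]) (simp_all add: relator_carrier[OF i] relator_carrier[OF j])
  then have AB: "A \<otimes>\<^bsub>Q3\<^esub> B = \<one>\<^bsub>Q3\<^esub>"
    using commutator_mult_swap relator_carrier[OF i] relator_carrier[OF j] \<pi>.hom_one by simp
  have "pow_prod Q3 (\<lambda>l. rho F S 3 #> relator_comm l) [(i, j), (j, i)] n
      = A [^]\<^bsub>Q3\<^esub> m \<otimes>\<^bsub>Q3\<^esub> B [^]\<^bsub>Q3\<^esub> m"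
    using relator_comm_carrier ij ji
    by (simp add: m A_def B_def \<pi>.H.int_pow_pow mult.commute del: mult_FactGroup one_FactGroup
        flip: int_pow_int)
  also have "\<dots> = (A \<otimes>\<^bsub>Q3\<^esub> B) [^]\<^bsub>Q3\<^esub> m"
    using cA by (intro \<pi>.H.int_pow_mult_distrib[symmetric] \<pi>.H.central_commute \<pi>.H.central_closed)
  finally show ?thesis by (simp only: AB \<pi>.H.int_pow_one)
qed

lemma S_inter_lower_central_3: "S \<inter> lower_central F 3 \<subseteq> rho F S 3"
proof
  fix s assume s: "s \<in> S \<inter> lower_central F 3"
  let ?N = "rho F S 3"
  interpret \<pi>: group_hom F Q3 "(#>) ?N" by (rule normal.group_hom_rcoset[OF rho_3_normal])
  have z: "relator_comm ` set offdiag \<subseteq> carrier F" using relator_comm_carrier by blast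
  have "s \<in> rho F S 2" using S_inter_lower_central_2 lower_central_3_subset_2 s by blast
  then obtain n where sn: "?N #> s = pow_prod Q3 (\<lambda>l. ?N #> relator_comm l) offdiag n"
    and k: "s \<otimes> inv (pow_prod F relator_comm offdiag n) \<in> ?N"
    using normal.central_span_FactGroup_elim[OF rho_3_normal _ z] rho_2_subset_central_span by blast
  let ?P = "pow_prod F relator_comm offdiag n"
  have P: "?P \<in> carrier F" by (rule pow_prod_closed[OF z])
  have sc: "s \<in> carrier F" using s S_carrier by blast
  have "coord_hom s = \<one>\<^bsub>heis\<^esub>" "coord_hom (s \<otimes> inv ?P) = \<one>\<^bsub>heis\<^esub>"
    using heis_hom_lower_central_3[OF coord_hom(1)] s k rho_3_subset_lower_central_3 by auto
  moreover have "inv (s \<otimes> inv ?P) \<otimes> s = ?P" using sc P by (simp add: inv_mult_group m_assoc)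
  then have "coord_hom ?P = inv\<^bsub>heis\<^esub> (coord_hom (s \<otimes> inv ?P)) \<otimes>\<^bsub>heis\<^esub> coord_hom s"
    using sc P by (metis coord.hom_inv coord.hom_mult inv_closed m_closed)
  ultimately have coord_P: "coord_hom ?P = \<one>\<^bsub>heis\<^esub>" by simp
  have blocks: "(\<lambda>l. ?N #> relator_comm l) ` set [(i, j), (j, i)] \<subseteq> carrier Q3 \<and>
      pow_prod Q3 (\<lambda>l. ?N #> relator_comm l) [(i, j), (j, i)] n = \<one>\<^bsub>Q3\<^esub>"
    if "(i, j) \<in> set pairs" for i j
  proof
    have ij: "(i, j) \<in> set offdiag" and ji: "(j, i) \<in> set offdiag"
      using that by (auto simp: set_pairs set_offdiag)
    then show "(\<lambda>l. ?N #> relator_comm l) ` set [(i, j), (j, i)] \<subseteq> carrier Q3"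
      using relator_comm_carrier by auto
    show "pow_prod Q3 (\<lambda>l. ?N #> relator_comm l) [(i, j), (j, i)] n = \<one>\<^bsub>Q3\<^esub>"
      by (rule pow_prod_swap_pair_mod_rho_3[OF ij exponent_relation[OF coord_P ij]])
  qed
  have "pow_prod Q3 (\<lambda>l. ?N #> relator_comm l) offdiag n = \<one>\<^bsub>Q3\<^esub>"
    unfolding offdiag_def by (intro \<pi>.H.pow_prod_concat_eq_one) (auto dest: blocks)
  then show "s \<in> ?N"
    using sn normal.rcos_eq_self_iff[OF rho_3_normal sc] by simp
qed

end

theorem corollary2p2:
  fixes F :: "'a monoid" and x :: "nat \<Rightarrow> 'a" and t :: nat and r :: "nat \<Rightarrow> nat" and S :: "'a set"
  assumes "t \<ge> 1"
    and "\<forall>i \<in> {1..t}. r i > 0"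
    and "\<forall>i \<in> {1..t}. \<forall>j \<in> {1..t}. i \<noteq> j \<longrightarrow> gcd (r i) (r j) = 1"
    and "free_group_on F x {1..t}"
    and "S = normal_closure F {x i [^]\<^bsub>F\<^esub> r i | i. i \<in> {1..t}}"
  shows "S \<inter> lower_central F 2 = rho F S 2 \<and>
         S \<inter> lower_central F 3 = rho F S 3 \<and>
         rho F S 2 \<inter> lower_central F 3 = rho F S 3"
proof -
  interpret cyclic_free_product F x t r S
  proof (rule cyclic_free_product.intro)
    show "plain_group F" using free_group_onD(1)[OF assms(4)] by (rule plain_group.intro)
    show "cyclic_free_product_axioms F x t r S"
      by (rule cyclic_free_product_axioms.intro[OF assms(2-5)])
  qed
  show ?thesis
    using S_inter_lower_central_2 S_inter_lower_central_3 rho_2_subset_S rho_3_subset_rho_2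
      rho_2_subset_lower_central_2 rho_3_subset_lower_central_3
    by blast
qed

end
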